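(* Let $n,m\in\mathbb{N}$, $f\in C[0,1]$, and let $\overline{B}_{n,m}$ be the composite Bernstein operator defined in the context. Then for every $k\in\{1,\dots,m\}$ and every $x\in\left[\frac{k-1}{m},\frac{k}{m}\right]$, $$ |\overline{B}_{n,m}(f;x)-f(x)|\le \frac32\,\omega_2\left(f;\sqrt{\frac{\left(x-\frac{k-1}{m}\right)\left(\frac{k}{m}-x\right)}{n}}\right). $$
   Context: For $a<b$, $f:[a,b]\to\mathbb{R}$ and $n\in\mathbb{N}$, the Bernstein polynomial on $[a,b]$ is $B_n^{[a,b]}(f;x)=\frac{1}{(b-a)^n}\sum_{i=0}^n\binom{n}{i}(x-a)^i(b-x)^{n-i}f\left(a+i\frac{b-a}{n}\right)$. For $m\in\mathbb{N}$ and $1\le k\le m$ put $B_{n,k}(f;x):=B_n^{[\frac{k-1}{m},\frac{k}{m}]}(f;x)$, and define $\overline{B}_{n,m}(f;x):=B_{n,k}(f;x)$ if $x\in\left[\frac{k-1}{m},\frac{k}{m}\right]$ (well defined at the break points, where both pieces equal $f(k/m)$). The second-order modulus of continuity on $[0,1]$ is $\omega_2(f,\delta)=\sup\{|f(x-h)-2f(x)+f(x+h)|: x\pm h\in[0,1],\ |h|\le\delta\}$ for $\delta\ge0$. *)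

theory Defs
  imports "HOL-Analysis.Analysis"
begin

definition bernstein_ab :: "nat \<Rightarrow> real \<Rightarrow> real \<Rightarrow> (real \<Rightarrow> real) \<Rightarrow> real \<Rightarrow> real" where
  "bernstein_ab n a b f x =
     (1 / (b - a) ^ n) * (\<Sum>i=0..n. real (n choose i) * (x - a) ^ i * (b - x) ^ (n - i)
                                      * f (a + real i * (b - a) / real n))"

definition bernstein_piece :: "nat \<Rightarrow> nat \<Rightarrow> nat \<Rightarrow> (real \<Rightarrow> real) \<Rightarrow> real \<Rightarrow> real" where
  "bernstein_piece n m k f x = bernstein_ab n ((real k - 1) / real m) (real k / real m) f x"

text \<open>Composite operator: on [(k-1)/m, k/m] use piece k. We take the least admissible
  k, namely k = max 1 (ceiling (m x)); at break points both pieces agree.\<close>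
definition bernstein_comp :: "nat \<Rightarrow> nat \<Rightarrow> (real \<Rightarrow> real) \<Rightarrow> real \<Rightarrow> real" where
  "bernstein_comp n m f x = bernstein_piece n m (max 1 (nat \<lceil>real m * x\<rceil>)) f x"

definition omega2 :: "(real \<Rightarrow> real) \<Rightarrow> real \<Rightarrow> real" where
  "omega2 f \<delta> = Sup {\<bar>f (x - h) - 2 * f x + f (x + h)\<bar> | x h.
      x - h \<in> {0..1} \<and> x + h \<in> {0..1} \<and> \<bar>h\<bar> \<le> \<delta>}"

end

theory Submission
  imports Defs
begin

text \<open>On one interval [a, b] the Bernstein operator at x averages f over the nodes
  with weights whose mean is x and whose variance is \<delta>^2 = (x - a)(b - x)/n.
  If all second differences of g with steps at most \<delta> are bounded by \<omega>, a maximum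
  principle comparing the chord error of g on [u, v] with the parabola
  \<omega> (1 + (y - u)(v - y)/(2\<delta>^2)) shows that
  D t = g t - g x - \<omega> (1 + (t - x)^2/(2\<delta>^2)) satisfies (v - x) D u + (x - u) D v \<le> 0
  for nodes u < x < v. Hence the values of D at the nodes lie below a line through
  (x, 0), whose average against the weights vanishes, so the average of D is \<le> 0;
  averaging the definition of D then yields the bound \<omega> + \<omega>/2. Applying this to f
  and -f bounds each piece, and at the break points both pieces interpolate f.\<close>

lemma second_difference_le_omega2:
  fixes f :: "real \<Rightarrow> real"
  assumes cont: "continuous_on {0..1} f"
    and "x - h \<in> {0..1}" and "x + h \<in> {0..1}" and "\<bar>h\<bar> \<le> \<delta>"
  shows "\<bar>f (x - h) - 2 * f x + f (x + h)\<bar> \<le> omega2 f \<delta>"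
  unfolding omega2_def
proof (rule cSup_upper)
  show "\<bar>f (x - h) - 2 * f x + f (x + h)\<bar> \<in> {\<bar>f (x - h) - 2 * f x + f (x + h)\<bar> | x h.
      x - h \<in> {0..1} \<and> x + h \<in> {0..1} \<and> \<bar>h\<bar> \<le> \<delta>}"
    using assms by blast
  obtain B where B: "\<And>t. t \<in> {0..1} \<Longrightarrow> \<bar>f t\<bar> \<le> B"
    using compact_imp_bounded[OF compact_continuous_image[OF cont]] bounded_iff
    by (metis compact_Icc image_eqI real_norm_def)
  show "bdd_above {\<bar>f (x - h) - 2 * f x + f (x + h)\<bar> | x h.
      x - h \<in> {0..1} \<and> x + h \<in> {0..1} \<and> \<bar>h\<bar> \<le> \<delta>}"
  proof (rule bdd_aboveI[of _ "4 * B"], clarify)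
    fix y k :: real assume yk: "y - k \<in> {0..1}" "y + k \<in> {0..1}"
    then have "y \<in> {0..1}" unfolding atLeastAtMost_iff by linarith
    then show "\<bar>f (y - k) - 2 * f y + f (y + k)\<bar> \<le> 4 * B"
      using B[of y] B[OF yk(1)] B[OF yk(2)] by linarith
  qed
qed

lemma omega2_nonneg:
  assumes "continuous_on {0..1} f" and "0 \<le> \<delta>"
  shows "0 \<le> omega2 f \<delta>"
  using second_difference_le_omega2[OF assms(1), of 0 0 \<delta>] assms(2) by simp

lemma chord_error_le_parabola_strict:
  fixes g :: "real \<Rightarrow> real"
  assumes cont: "continuous_on {\<alpha>..\<beta>} g" and "\<alpha> < \<beta>" and "h > 0" and "\<omega> < \<omega>'"
    and second_diff: "\<And>z s. \<alpha> \<le> z - s \<Longrightarrow> z + s \<le> \<beta> \<Longrightarrow> 0 \<le> s \<Longrightarrow> s \<le> h \<Longrightarrow>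
      g (z - s) - 2 * g z + g (z + s) \<le> \<omega>"
    and "y \<in> {\<alpha>..\<beta>}"
  shows "g \<alpha> + (y - \<alpha>) * ((g \<beta> - g \<alpha>) / (\<beta> - \<alpha>)) - g y
    \<le> \<omega>' * (1 + (y - \<alpha>) * (\<beta> - y) / (2 * h\<^sup>2))"
proof -
  define c where "c = (g \<beta> - g \<alpha>) / (\<beta> - \<alpha>)"
  define \<phi> where "\<phi> y = g \<alpha> + (y - \<alpha>) * c - g y
    - \<omega>' * (1 + (y - \<alpha>) * (\<beta> - y) / (2 * h\<^sup>2))" for y
  have "0 \<le> \<omega>" using second_diff[of \<alpha> 0] \<open>\<alpha> < \<beta>\<close> \<open>h > 0\<close> by simp
  have "continuous_on {\<alpha>..\<beta>} \<phi>"
    unfolding \<phi>_def using \<open>\<alpha> < \<beta>\<close> \<open>h > 0\<close> by (intro continuous_intros cont) auto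
  then obtain y0 where y0: "y0 \<in> {\<alpha>..\<beta>}" and max: "\<And>y. y \<in> {\<alpha>..\<beta>} \<Longrightarrow> \<phi> y \<le> \<phi> y0"
    using continuous_attains_sup[of "{\<alpha>..\<beta>}" \<phi>] \<open>\<alpha> < \<beta>\<close> by auto
  text \<open>At an interior maximum of \<phi> the second difference with step h is at least
    \<omega>' - \<omega>, which is why the parabola needs \<omega>' > \<omega> rather than \<omega>.\<close>
  have "\<phi> y0 \<le> 0"
  proof (rule ccontr)
    assume "\<not> \<phi> y0 \<le> 0"
    have \<phi>_ends: "\<phi> \<alpha> = - \<omega>'" "\<phi> \<beta> = - \<omega>'"
      unfolding \<phi>_def c_def using \<open>\<alpha> < \<beta>\<close> by auto
    then have "\<alpha> < y0" "y0 < \<beta>"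
      using y0 \<open>\<not> \<phi> y0 \<le> 0\<close> \<open>0 \<le> \<omega>\<close> \<open>\<omega> < \<omega>'\<close> by (auto simp: less_eq_real_def)
    define s where "s = min h (min (y0 - \<alpha>) (\<beta> - y0))"
    have s: "0 < s" "s \<le> h" "\<alpha> \<le> y0 - s" "y0 + s \<le> \<beta>"
      using \<open>h > 0\<close> \<open>\<alpha> < y0\<close> \<open>y0 < \<beta>\<close> by (auto simp: s_def)
    have "\<phi> (y0 - s) + \<phi> (y0 + s) - 2 * \<phi> y0
        = - (g (y0 - s) - 2 * g y0 + g (y0 + s)) + \<omega>' * s\<^sup>2 / h\<^sup>2"
      unfolding \<phi>_def using \<open>h > 0\<close> by (simp add: field_simps power2_eq_square)
    also have "\<dots> \<ge> - \<omega> + \<omega>' * s\<^sup>2 / h\<^sup>2"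
      using second_diff[of y0 s] s by simp
    finally have lower: "- \<omega> + \<omega>' * s\<^sup>2 / h\<^sup>2 \<le> \<phi> (y0 - s) + \<phi> (y0 + s) - 2 * \<phi> y0" .
    have below: "\<phi> (y0 - s) \<le> \<phi> y0" "\<phi> (y0 + s) \<le> \<phi> y0"
      using max s \<open>y0 < \<beta>\<close> \<open>\<alpha> < y0\<close> by auto
    have "0 \<le> \<omega>' * s\<^sup>2 / h\<^sup>2"
      using \<open>0 \<le> \<omega>\<close> \<open>\<omega> < \<omega>'\<close> by simp
    consider "s = h" | "y0 - s = \<alpha>" | "y0 + s = \<beta>"
      unfolding s_def by linarith
    then show False
    proof cases
      case 1
      then have "\<omega>' * s\<^sup>2 / h\<^sup>2 = \<omega>'" using \<open>h > 0\<close> by simp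
      then show False using lower below \<open>\<omega> < \<omega>'\<close> by linarith
    next
      case 2
      then show False
        using lower below \<phi>_ends \<open>0 \<le> \<omega>' * s\<^sup>2 / h\<^sup>2\<close> \<open>\<omega> < \<omega>'\<close> \<open>\<not> \<phi> y0 \<le> 0\<close>
        by simp
    next
      case 3
      then show False
        using lower below \<phi>_ends \<open>0 \<le> \<omega>' * s\<^sup>2 / h\<^sup>2\<close> \<open>\<omega> < \<omega>'\<close> \<open>\<not> \<phi> y0 \<le> 0\<close>
        by simp
    qed
  qed
  then show ?thesis
    using max[OF \<open>y \<in> {\<alpha>..\<beta>}\<close>] unfolding \<phi>_def c_def by simp
qed

lemma chord_error_le_parabola:
  fixes g :: "real \<Rightarrow> real"
  assumes cont: "continuous_on {\<alpha>..\<beta>} g" and "\<alpha> < \<beta>" and "h > 0"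
    and second_diff: "\<And>z s. \<alpha> \<le> z - s \<Longrightarrow> z + s \<le> \<beta> \<Longrightarrow> 0 \<le> s \<Longrightarrow> s \<le> h \<Longrightarrow>
      g (z - s) - 2 * g z + g (z + s) \<le> \<omega>"
    and y: "y \<in> {\<alpha>..\<beta>}"
  shows "g \<alpha> + (y - \<alpha>) * ((g \<beta> - g \<alpha>) / (\<beta> - \<alpha>)) - g y
    \<le> \<omega> * (1 + (y - \<alpha>) * (\<beta> - y) / (2 * h\<^sup>2))"
proof (rule dense_ge)
  define q where "q = 1 + (y - \<alpha>) * (\<beta> - y) / (2 * h\<^sup>2)"
  have "0 \<le> (y - \<alpha>) * (\<beta> - y) / (2 * h\<^sup>2)" using y by simp
  then have "q > 0" unfolding q_def by linarith
  fix r assume "\<omega> * (1 + (y - \<alpha>) * (\<beta> - y) / (2 * h\<^sup>2)) < r"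
  then have "\<omega> < r / q" using \<open>q > 0\<close> by (simp add: q_def field_simps)
  from chord_error_le_parabola_strict[OF cont \<open>\<alpha> < \<beta>\<close> \<open>h > 0\<close> this second_diff y]
  show "g \<alpha> + (y - \<alpha>) * ((g \<beta> - g \<alpha>) / (\<beta> - \<alpha>)) - g y \<le> r"
    using \<open>q > 0\<close> by (simp add: q_def[symmetric])
qed

lemma linear_majorant_exists:
  fixes D t :: "'a \<Rightarrow> real"
  assumes "finite I"
    and centre: "\<And>i. i \<in> I \<Longrightarrow> t i = x \<Longrightarrow> D i \<le> 0"
    and pair: "\<And>i j. i \<in> I \<Longrightarrow> j \<in> I \<Longrightarrow> t i < x \<Longrightarrow> x < t j \<Longrightarrow>
      (t j - x) * D i + (x - t i) * D j \<le> 0"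
  shows "\<exists>l. \<forall>i\<in>I. D i \<le> l * (t i - x)"
proof -
  define slope where "slope i = D i / (t i - x)" for i
  define L where "L = {i \<in> I. t i < x}"
  define R where "R = {i \<in> I. x < t i}"
  have slope_le: "slope j \<le> slope i" if "i \<in> L" "j \<in> R" for i j
    using pair[of i j] that unfolding L_def R_def slope_def
    by (auto simp: field_simps)
  text \<open>Any value between the slopes to the right of x and those to the left will do;
    the inserted elements only keep both sets nonempty.\<close>
  define l where "l = Max (insert (Min (insert 0 (slope ` L))) (slope ` R))"
  have finite: "finite L" "finite R" using \<open>finite I\<close> by (auto simp: L_def R_def)
  have right: "slope j \<le> l" if "j \<in> R" for j
    unfolding l_def using finite that by (intro Max_ge) auto
  have left: "l \<le> slope i" if "i \<in> L" for i
    unfolding l_def using finite that slope_le by (auto intro: Min_le order.trans)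
  have "D i \<le> l * (t i - x)" if "i \<in> I" for i
  proof (cases "t i" x rule: linorder_cases)
    case less
    with left[of i] that show ?thesis
      by (auto simp: L_def slope_def field_simps)
  next
    case equal
    with centre that show ?thesis by simp
  next
    case greater
    with right[of i] that show ?thesis
      by (auto simp: R_def slope_def field_simps)
  qed
  then show ?thesis by blast
qed

lemma weighted_mean_minus_le_of_second_difference_le:
  fixes g :: "real \<Rightarrow> real" and p t :: "'a \<Rightarrow> real"
  assumes cont: "continuous_on {c..d} g" and "h > 0"
    and second_diff: "\<And>z s. c \<le> z - s \<Longrightarrow> z + s \<le> d \<Longrightarrow> 0 \<le> s \<Longrightarrow> s \<le> h \<Longrightarrow>
      g (z - s) - 2 * g z + g (z + s) \<le> \<omega>"
    and "finite I" and p_nonneg: "\<And>i. i \<in> I \<Longrightarrow> 0 \<le> p i"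
    and t_in: "\<And>i. i \<in> I \<Longrightarrow> t i \<in> {c..d}"
    and sum_p: "sum p I = 1"
    and mean: "(\<Sum>i\<in>I. p i * (t i - x)) = 0"
    and variance: "(\<Sum>i\<in>I. p i * (t i - x)\<^sup>2) = h\<^sup>2"
  shows "(\<Sum>i\<in>I. p i * g (t i)) - g x \<le> 3 / 2 * \<omega>"
proof -
  obtain i0 where "i0 \<in> I" using sum_p by fastforce
  then have "0 \<le> \<omega>" using second_diff[of "t i0" 0] t_in \<open>h > 0\<close> by simp
  define D where "D i = g (t i) - g x - \<omega> * (1 + (t i - x)\<^sup>2 / (2 * h\<^sup>2))" for i
  have "\<exists>l. \<forall>i\<in>I. D i \<le> l * (t i - x)"
  proof (rule linear_majorant_exists[OF \<open>finite I\<close>])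
    show "D i \<le> 0" if "t i = x" for i
      using \<open>0 \<le> \<omega>\<close> that by (simp add: D_def)
    fix i j assume "i \<in> I" "j \<in> I" "t i < x" "x < t j"
    have sub: "{t i..t j} \<subseteq> {c..d}" using t_in \<open>i \<in> I\<close> \<open>j \<in> I\<close> by auto
    define chord_error where "chord_error =
      g (t i) + (x - t i) * ((g (t j) - g (t i)) / (t j - t i)) - g x"
    have "chord_error \<le> \<omega> * (1 + (x - t i) * (t j - x) / (2 * h\<^sup>2))"
      unfolding chord_error_def
      by (rule chord_error_le_parabola[OF continuous_on_subset[OF cont sub] _ \<open>h > 0\<close>])
        (use \<open>t i < x\<close> \<open>x < t j\<close> sub in \<open>auto intro: second_diff\<close>)
    moreover have "(t j - x) * D i + (x - t i) * D j
        = (t j - t i) * (chord_error - \<omega> * (1 + (x - t i) * (t j - x) / (2 * h\<^sup>2)))"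
      using \<open>t i < x\<close> \<open>x < t j\<close> \<open>h > 0\<close>
      by (simp add: D_def chord_error_def field_simps power2_eq_square)
    ultimately show "(t j - x) * D i + (x - t i) * D j \<le> 0"
      using \<open>t i < x\<close> \<open>x < t j\<close> by (simp add: mult_nonneg_nonpos)
  qed
  then obtain l where l: "\<And>i. i \<in> I \<Longrightarrow> D i \<le> l * (t i - x)" by blast
  have "(\<Sum>i\<in>I. p i * D i) \<le> (\<Sum>i\<in>I. l * (p i * (t i - x)))"
  proof (rule sum_mono)
    fix i assume "i \<in> I"
    then have "p i * D i \<le> p i * (l * (t i - x))"
      using l p_nonneg by (intro mult_left_mono)
    then show "p i * D i \<le> l * (p i * (t i - x))" by (simp add: algebra_simps)
  qed
  also have "\<dots> = 0" using mean by (simp add: sum_distrib_left[symmetric])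
  finally have "(\<Sum>i\<in>I. p i * D i) \<le> 0" .
  moreover have "(\<Sum>i\<in>I. p i * g (t i)) = (\<Sum>i\<in>I. p i * D i) + (g x + \<omega>) * sum p I
      + \<omega> / (2 * h\<^sup>2) * (\<Sum>i\<in>I. p i * (t i - x)\<^sup>2)"
    unfolding D_def
    by (simp add: sum_distrib_left sum.distrib[symmetric] algebra_simps sum_divide_distrib)
  ultimately show ?thesis using sum_p variance \<open>h > 0\<close> by simp
qed

lemma abs_weighted_mean_minus_le_of_second_difference_le:
  fixes g :: "real \<Rightarrow> real" and p t :: "'a \<Rightarrow> real"
  assumes cont: "continuous_on {c..d} g" and "h > 0"
    and second_diff: "\<And>z s. c \<le> z - s \<Longrightarrow> z + s \<le> d \<Longrightarrow> 0 \<le> s \<Longrightarrow> s \<le> h \<Longrightarrow>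
      \<bar>g (z - s) - 2 * g z + g (z + s)\<bar> \<le> \<omega>"
    and "finite I" and "\<And>i. i \<in> I \<Longrightarrow> 0 \<le> p i" and "\<And>i. i \<in> I \<Longrightarrow> t i \<in> {c..d}"
    and "sum p I = 1" and "(\<Sum>i\<in>I. p i * (t i - x)) = 0"
    and "(\<Sum>i\<in>I. p i * (t i - x)\<^sup>2) = h\<^sup>2"
  shows "\<bar>(\<Sum>i\<in>I. p i * g (t i)) - g x\<bar> \<le> 3 / 2 * \<omega>"
proof -
  have "(\<Sum>i\<in>I. p i * g (t i)) - g x \<le> 3 / 2 * \<omega>"
    by (rule weighted_mean_minus_le_of_second_difference_le[OF cont \<open>h > 0\<close> _ assms(4-)])
      (use second_diff in \<open>simp add: abs_le_iff\<close>)
  moreover have "(\<Sum>i\<in>I. p i * - g (t i)) - - g x \<le> 3 / 2 * \<omega>"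
    by (rule weighted_mean_minus_le_of_second_difference_le[OF _ \<open>h > 0\<close> _ assms(4-)])
      (use cont second_diff in \<open>auto intro: continuous_intros simp: abs_le_iff\<close>)
  moreover have "(\<Sum>i\<in>I. p i * - g (t i)) = - (\<Sum>i\<in>I. p i * g (t i))"
    by (simp add: sum_negf)
  ultimately show ?thesis unfolding abs_le_iff by linarith
qed

lemma bernstein_ab_eq_Bernstein:
  assumes "a \<noteq> b"
  shows "bernstein_ab n a b f x =
    (\<Sum>i\<le>n. Bernstein n i ((x - a) / (b - a)) * f (a + real i * (b - a) / real n))"
  unfolding bernstein_ab_def atLeast0AtMost sum_distrib_left
proof (rule sum.cong[OF refl])
  fix i assume "i \<in> {..n}"
  then have "(b - a) ^ n = (b - a) ^ i * (b - a) ^ (n - i)"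
    by (simp flip: power_add)
  moreover have "1 - (x - a) / (b - a) = (b - x) / (b - a)"
    using assms by (simp add: field_simps)
  ultimately show "1 / (b - a) ^ n * (real (n choose i) * (x - a) ^ i * (b - x) ^ (n - i)
      * f (a + real i * (b - a) / real n))
    = Bernstein n i ((x - a) / (b - a)) * f (a + real i * (b - a) / real n)"
    unfolding Bernstein_def using assms by (simp add: power_divide)
qed

lemma bernstein_ab_left:
  assumes "a \<noteq> b"
  shows "bernstein_ab n a b f a = f a"
  by (simp add: bernstein_ab_eq_Bernstein[OF assms] Bernstein_def atMost_atLeast0
      sum.atLeast_Suc_atMost power_0_left)

lemma bernstein_ab_right:
  assumes "a \<noteq> b" and "n \<ge> 1"
  shows "bernstein_ab n a b f b = f b"
proof -
  have "(\<Sum>i<n. Bernstein n i 1 * f (a + real i * (b - a) / real n)) = 0"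
    by (intro sum.neutral) (auto simp: Bernstein_def)
  then show ?thesis
    using assms by (simp add: bernstein_ab_eq_Bernstein lessThan_Suc_atMost[symmetric] Bernstein_def)
qed

lemma sum_Bernstein_centered:
  assumes "n \<ge> 1"
  shows "(\<Sum>k\<le>n. Bernstein n k y * (real k / real n - y)) = 0"
proof -
  have "(\<Sum>k\<le>n. Bernstein n k y * (real k / real n - y))
      = (\<Sum>k\<le>n. (real k * Bernstein n k y) / real n - y * Bernstein n k y)"
    by (intro sum.cong refl) (simp add: algebra_simps)
  also have "\<dots> = (\<Sum>k\<le>n. real k * Bernstein n k y) / real n - y * (\<Sum>k\<le>n. Bernstein n k y)"
    by (simp only: sum_subtractf sum_divide_distrib sum_distrib_left)
  finally show ?thesis using assms by simp
qed

lemma sum_Bernstein_centered_square: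
  assumes "n \<ge> 1"
  shows "(\<Sum>k\<le>n. Bernstein n k y * (real k / real n - y)\<^sup>2) = y * (1 - y) / real n"
proof -
  have "(\<Sum>k\<le>n. Bernstein n k y * (real k / real n - y)\<^sup>2)
      = (\<Sum>k\<le>n. 1 / (real n)\<^sup>2 * (real k * (real k - 1) * Bernstein n k y)
          + (1 / (real n)\<^sup>2 - 2 * y / real n) * (real k * Bernstein n k y)
          + y\<^sup>2 * Bernstein n k y)"
    using assms by (intro sum.cong refl) (simp add: field_simps power2_eq_square)
  also have "\<dots> = 1 / (real n)\<^sup>2 * (real n * (real n - 1) * y\<^sup>2)
      + (1 / (real n)\<^sup>2 - 2 * y / real n) * (real n * y) + y\<^sup>2"
    by (simp only: sum.distrib sum_distrib_left[symmetric] sum_kk_Bernstein sum_k_Bernstein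
        sum_Bernstein mult_1_right)
  also have "\<dots> = y * (1 - y) / real n"
    using assms by (simp add: field_simps power2_eq_square)
  finally show ?thesis .
qed

lemma abs_bernstein_ab_minus_le_omega2:
  fixes f :: "real \<Rightarrow> real"
  assumes cont: "continuous_on {0..1} f" and "n \<ge> 1"
    and "0 \<le> a" and "a < b" and "b \<le> 1" and x: "x \<in> {a..b}"
  shows "\<bar>bernstein_ab n a b f x - f x\<bar> \<le> 3 / 2 * omega2 f (sqrt ((x - a) * (b - x) / real n))"
proof -
  define \<delta> where "\<delta> = sqrt ((x - a) * (b - x) / real n)"
  have "0 \<le> omega2 f \<delta>" using omega2_nonneg[OF cont] x by (simp add: \<delta>_def)
  consider "x = a" | "x = b" | "a < x" "x < b" using x by fastforce
  then show ?thesis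
  proof cases
    case 1
    then show ?thesis using bernstein_ab_left \<open>a < b\<close> \<open>0 \<le> omega2 f \<delta>\<close> by (simp add: \<delta>_def)
  next
    case 2
    then show ?thesis
      using bernstein_ab_right \<open>a < b\<close> \<open>n \<ge> 1\<close> \<open>0 \<le> omega2 f \<delta>\<close> by (simp add: \<delta>_def)
  next
    case 3
    define y where "y = (x - a) / (b - a)"
    define t where "t i = a + real i * (b - a) / real n" for i
    have \<delta>: "\<delta> > 0" "\<delta>\<^sup>2 = (x - a) * (b - x) / real n"
      using 3 \<open>n \<ge> 1\<close> by (auto simp: \<delta>_def)
    have "0 \<le> y" "y \<le> 1" using x \<open>a < b\<close> by (auto simp: y_def)
    have t_minus_x: "t i - x = (b - a) * (real i / real n - y)" for i
      using \<open>a < b\<close> by (simp add: t_def y_def field_simps)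
    have t_in: "t i \<in> {0..1}" if "i \<le> n" for i
    proof -
      have "real i * (b - a) / real n \<le> real n * (b - a) / real n"
        using that \<open>a < b\<close> by (intro divide_right_mono mult_right_mono) auto
      then have "real i * (b - a) / real n \<le> b - a" using \<open>n \<ge> 1\<close> by simp
      then show ?thesis using \<open>0 \<le> a\<close> \<open>a < b\<close> \<open>b \<le> 1\<close> by (simp add: t_def)
    qed
    have "(\<Sum>i\<le>n. Bernstein n i y * (t i - x))
        = (b - a) * (\<Sum>i\<le>n. Bernstein n i y * (real i / real n - y))"
      unfolding t_minus_x by (simp add: sum_distrib_left ac_simps)
    then have mean: "(\<Sum>i\<le>n. Bernstein n i y * (t i - x)) = 0"
      using sum_Bernstein_centered[OF \<open>n \<ge> 1\<close>] by simp
    have "(\<Sum>i\<le>n. Bernstein n i y * (t i - x)\<^sup>2)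
        = (b - a)\<^sup>2 * (\<Sum>i\<le>n. Bernstein n i y * (real i / real n - y)\<^sup>2)"
      unfolding t_minus_x by (simp add: sum_distrib_left power_mult_distrib ac_simps)
    also have "\<dots> = (b - a)\<^sup>2 * (y * (1 - y) / real n)"
      using sum_Bernstein_centered_square[OF \<open>n \<ge> 1\<close>] by simp
    also have "\<dots> = (x - a) * (b - x) / real n"
    proof -
      have "1 - y = (b - x) / (b - a)" using \<open>a < b\<close> by (simp add: y_def field_simps)
      then show ?thesis using \<open>a < b\<close> by (simp add: y_def power2_eq_square)
    qed
    finally have variance: "(\<Sum>i\<le>n. Bernstein n i y * (t i - x)\<^sup>2) = \<delta>\<^sup>2"
      using \<delta> by simp
    have "\<bar>(\<Sum>i\<le>n. Bernstein n i y * f (t i)) - f x\<bar> \<le> 3 / 2 * omega2 f \<delta>"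
      using t_in mean variance \<open>0 \<le> y\<close> \<open>y \<le> 1\<close>
      by (intro abs_weighted_mean_minus_le_of_second_difference_le[OF cont \<open>\<delta> > 0\<close>])
        (auto intro: second_difference_le_omega2[OF cont] Bernstein_nonneg)
    then show ?thesis
      using \<open>a < b\<close> by (simp add: bernstein_ab_eq_Bernstein \<delta>_def y_def t_def)
  qed
qed

lemma bernstein_comp_eq_piece:
  assumes "n \<ge> 1" and "1 \<le> k" and "k \<le> m"
    and "(real k - 1) / real m \<le> x" and "x \<le> real k / real m"
  shows "bernstein_comp n m f x = bernstein_piece n m k f x"
proof -
  have "real m > 0" using assms by simp
  then have mx: "real k - 1 \<le> real m * x" "real m * x \<le> real k"
    using assms(4,5) by (simp_all add: field_simps)
  show ?thesis
  proof (cases "real m * x = real k - 1 \<and> k \<ge> 2")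
    case True
    text \<open>At the left end of piece k the operator uses piece k - 1; both interpolate f there.\<close>
    then have mx_eq: "real m * x = real (k - 1)" by (simp add: of_nat_diff)
    then have "max 1 (nat \<lceil>real m * x\<rceil>) = k - 1"
      using True by (simp only: ceiling_of_nat nat_int) (auto simp: max_def)
    have x: "x = real (k - 1) / real m" using mx_eq \<open>real m > 0\<close> by (simp add: field_simps)
    have "bernstein_comp n m f x = f x"
      unfolding bernstein_comp_def bernstein_piece_def \<open>max 1 (nat \<lceil>real m * x\<rceil>) = k - 1\<close>
      using bernstein_ab_right[OF _ \<open>n \<ge> 1\<close>, of "(real (k - 1) - 1) / real m" x] x \<open>real m > 0\<close>
      by simp
    moreover have "bernstein_piece n m k f x = f x"
      unfolding bernstein_piece_def
      using bernstein_ab_left[of "(real k - 1) / real m" "real k / real m"] x True \<open>real m > 0\<close>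
      by (simp add: of_nat_diff)
    ultimately show ?thesis by simp
  next
    case False
    have "\<lceil>real m * x\<rceil> = int k \<or> k = 1 \<and> real m * x = 0"
    proof (cases "real k - 1 < real m * x")
      case True
      then show ?thesis using mx by (auto intro: ceiling_unique)
    next
      case False
      then have "real m * x = real k - 1" using mx by simp
      moreover from this have "k = 1"
        using \<open>\<not> (real m * x = real k - 1 \<and> k \<ge> 2)\<close> \<open>1 \<le> k\<close> by simp
      ultimately show ?thesis by simp
    qed
    then have "max 1 (nat \<lceil>real m * x\<rceil>) = k" using assms(2) by auto
    then show ?thesis unfolding bernstein_comp_def by simp
  qed
qed

theorem mainTheorem1:
  fixes n m k :: nat and f :: "real \<Rightarrow> real" and x :: real
  assumes "n \<ge> 1" and "m \<ge> 1"
    and "continuous_on {0..1} f"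
    and "1 \<le> k" and "k \<le> m"
    and "(real k - 1) / real m \<le> x" and "x \<le> real k / real m"
  shows "\<bar>bernstein_comp n m f x - f x\<bar>
         \<le> 3 / 2 * omega2 f (sqrt ((x - (real k - 1) / real m) * (real k / real m - x) / real n))"
proof -
  have "0 \<le> (real k - 1) / real m" "(real k - 1) / real m < real k / real m" "real k / real m \<le> 1"
    using assms by (auto simp: divide_strict_right_mono)
  then show ?thesis
    using abs_bernstein_ab_minus_le_omega2[OF assms(3,1)] bernstein_comp_eq_piece[OF assms(1,4-)]
      assms(6,7)
    by (simp add: bernstein_piece_def)
qed

end
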